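(* Let $f:\mathcal{C}\to\mathcal{D}$ be a morphism of codes. If $\mathcal{C}$ is intersection complete, then $f(\mathcal{C})$ is intersection complete. If $\mathcal{C}$ is max-intersection complete, then $f(\mathcal{C})$ is max-intersection complete.
   Context: A code is a subset $\mathcal{C}\subseteq 2^{[n]}$. For $\sigma\subseteq[n]$, $\mathrm{Tk}_{\mathcal{C}}(\sigma)=\{c\in\mathcal{C}\mid\sigma\subseteq c\}$; a trunk in $\mathcal{C}$ is a subset that is empty or of the form $\mathrm{Tk}_{\mathcal{C}}(\sigma)$. A function $f:\mathcal{C}\to\mathcal{D}$ between codes is a morphism if the preimage of every trunk in $\mathcal{D}$ is a trunk in $\mathcal{C}$. A code is intersection complete if $c_1\cap c_2\in\mathcal{C}$ for all $c_1,c_2\in\mathcal{C}$. A code is max-intersection complete if the intersection of any nonempty collection of maximal (under inclusion) codewords of $\mathcal{C}$ belongs to $\mathcal{C}$. *)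

theory Defs
  imports Main
begin

definition is_code :: "nat \<Rightarrow> nat set set \<Rightarrow> bool" where
  "is_code n C \<longleftrightarrow> C \<subseteq> Pow {1..n}"

definition Tk :: "nat set set \<Rightarrow> nat set \<Rightarrow> nat set set" where
  "Tk C \<sigma> = {c \<in> C. \<sigma> \<subseteq> c}"

definition is_trunk :: "nat \<Rightarrow> nat set set \<Rightarrow> nat set set \<Rightarrow> bool" where
  "is_trunk n C T \<longleftrightarrow> T = {} \<or> (\<exists>\<sigma>. \<sigma> \<subseteq> {1..n} \<and> T = Tk C \<sigma>)"

definition code_morphism ::
  "nat \<Rightarrow> nat set set \<Rightarrow> nat \<Rightarrow> nat set set \<Rightarrow> (nat set \<Rightarrow> nat set) \<Rightarrow> bool" where
  "code_morphism n C m D f \<longleftrightarrow>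
     (\<forall>c\<in>C. f c \<in> D) \<and>
     (\<forall>T. is_trunk m D T \<longrightarrow> is_trunk n C {c \<in> C. f c \<in> T})"

definition intersection_complete :: "nat set set \<Rightarrow> bool" where
  "intersection_complete C \<longleftrightarrow> (\<forall>c1\<in>C. \<forall>c2\<in>C. c1 \<inter> c2 \<in> C)"

definition max_codewords :: "nat set set \<Rightarrow> nat set set" where
  "max_codewords C = {c \<in> C. \<forall>c'\<in>C. c \<subseteq> c' \<longrightarrow> c' = c}"

definition max_intersection_complete :: "nat set set \<Rightarrow> bool" where
  "max_intersection_complete C \<longleftrightarrow>
     (\<forall>S. S \<subseteq> max_codewords C \<and> S \<noteq> {} \<longrightarrow> \<Inter>S \<in> C)"

end

theory Submission
  imports Defs
begin

text \<open>A morphism is monotone and preserves every intersection that exists in \<open>C\<close>: the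
  preimage of the trunk \<open>Tk D (\<Inter>(f ` A))\<close> is a trunk of \<open>C\<close> containing \<open>A\<close>, hence it
  contains \<open>\<Inter>A\<close>. So images of intersections are intersections of images, and every
  maximal codeword of \<open>f ` C\<close> is the image of a maximal codeword of \<open>C\<close>.\<close>

lemma trunk_Inter_closed:
  assumes "is_trunk n C T" "A \<subseteq> T" "A \<noteq> {}" "\<Inter>A \<in> C"
  shows "\<Inter>A \<in> T"
  using assms unfolding is_trunk_def Tk_def by blast

lemma trunk_upward_closed:
  assumes "is_trunk n C T" "c \<in> T" "c \<subseteq> c'" "c' \<in> C"
  shows "c' \<in> T"
  using assms unfolding is_trunk_def Tk_def by blast

lemma code_morphism_mem:
  "code_morphism n C m D f \<Longrightarrow> c \<in> C \<Longrightarrow> f c \<in> D"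
  unfolding code_morphism_def by blast

lemma code_morphism_preimage_Tk:
  assumes "code_morphism n C m D f" "\<tau> \<subseteq> {1..m}"
  shows "is_trunk n C {c \<in> C. f c \<in> Tk D \<tau>}"
  using assms unfolding code_morphism_def is_trunk_def by blast

lemma code_morphism_subset_ground:
  "is_code m D \<Longrightarrow> code_morphism n C m D f \<Longrightarrow> c \<in> C \<Longrightarrow> f c \<subseteq> {1..m}"
  unfolding is_code_def code_morphism_def by blast

lemma code_morphism_mono:
  assumes D: "is_code m D" and f: "code_morphism n C m D f"
    and "c \<in> C" "c' \<in> C" "c \<subseteq> c'"
  shows "f c \<subseteq> f c'"
proof -
  let ?T = "{x \<in> C. f x \<in> Tk D (f c)}"
  have "is_trunk n C ?T"
    using code_morphism_preimage_Tk[OF f] code_morphism_subset_ground[OF D f] assms by blast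
  moreover have "c \<in> ?T"
    using assms code_morphism_mem[OF f] by (simp add: Tk_def)
  ultimately have "c' \<in> ?T"
    using trunk_upward_closed assms by blast
  then show ?thesis by (simp add: Tk_def)
qed

lemma code_morphism_Inter:
  assumes D: "is_code m D" and f: "code_morphism n C m D f"
    and A: "A \<subseteq> C" "A \<noteq> {}" "\<Inter>A \<in> C"
  shows "f (\<Inter>A) = \<Inter>(f ` A)"
proof
  show "f (\<Inter>A) \<subseteq> \<Inter>(f ` A)"
    using code_morphism_mono[OF D f] A by blast
next
  let ?T = "{x \<in> C. f x \<in> Tk D (\<Inter>(f ` A))}"
  have "\<Inter>(f ` A) \<subseteq> {1..m}"
    using A code_morphism_subset_ground[OF D f] by blast
  then have "is_trunk n C ?T"
    by (rule code_morphism_preimage_Tk[OF f])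
  moreover have "A \<subseteq> ?T"
    using A code_morphism_mem[OF f] by (auto simp: Tk_def)
  ultimately have "\<Inter>A \<in> ?T"
    using trunk_Inter_closed A by blast
  then show "\<Inter>(f ` A) \<subseteq> f (\<Inter>A)" by (simp add: Tk_def)
qed

lemma code_morphism_Int:
  assumes "is_code m D" "code_morphism n C m D f"
    and "c1 \<in> C" "c2 \<in> C" "c1 \<inter> c2 \<in> C"
  shows "f (c1 \<inter> c2) = f c1 \<inter> f c2"
  using code_morphism_Inter[OF assms(1,2), of "{c1, c2}"] assms(3-5) by simp

lemma finite_code: "is_code n C \<Longrightarrow> finite C"
  unfolding is_code_def by (meson finite_Pow_iff finite_atLeastAtMost finite_subset)

lemma max_codewords_image:
  assumes C: "is_code n C" and D: "is_code m D" and f: "code_morphism n C m D f"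
    and s: "s \<in> max_codewords (f ` C)"
  obtains c where "c \<in> max_codewords C" "s = f c"
proof -
  obtain c0 where c0: "c0 \<in> C" "s = f c0"
    using s unfolding max_codewords_def by blast
  obtain c where c: "c \<in> C" "c0 \<subseteq> c" "\<forall>b\<in>C. c \<subseteq> b \<longrightarrow> c = b"
    using finite_has_maximal2[OF finite_code[OF C] c0(1)] by blast
  have "c \<in> max_codewords C"
    using c unfolding max_codewords_def by blast
  moreover have "s \<subseteq> f c"
    using code_morphism_mono[OF D f c0(1) c(1,2)] c0(2) by simp
  then have "s = f c"
    using s c(1) unfolding max_codewords_def by blast
  ultimately show thesis by (rule that)
qed

lemma intersection_complete_image:
  assumes "is_code m D" "code_morphism n C m D f" "intersection_complete C"
  shows "intersection_complete (f ` C)"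
  unfolding intersection_complete_def
proof (intro ballI)
  fix d1 d2 assume "d1 \<in> f ` C" "d2 \<in> f ` C"
  then obtain c1 c2 where c: "c1 \<in> C" "c2 \<in> C" "d1 = f c1" "d2 = f c2" by blast
  with assms(3) have "c1 \<inter> c2 \<in> C" unfolding intersection_complete_def by blast
  moreover have "f (c1 \<inter> c2) = d1 \<inter> d2"
    using code_morphism_Int[OF assms(1,2) c(1,2) calculation] c(3,4) by simp
  ultimately show "d1 \<inter> d2 \<in> f ` C" by (metis image_eqI)
qed

lemma max_intersection_complete_image:
  assumes C: "is_code n C" and D: "is_code m D" and f: "code_morphism n C m D f"
    and mic: "max_intersection_complete C"
  shows "max_intersection_complete (f ` C)"
  unfolding max_intersection_complete_def
proof (intro allI impI)
  fix S assume S: "S \<subseteq> max_codewords (f ` C) \<and> S \<noteq> {}"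
  define S' where "S' = {c \<in> max_codewords C. f c \<in> S}"
  have S_eq: "S = f ` S'"
  proof
    show "S \<subseteq> f ` S'"
    proof
      fix s assume "s \<in> S"
      with S obtain c where "c \<in> max_codewords C" "s = f c"
        using max_codewords_image[OF C D f] by blast
      with \<open>s \<in> S\<close> show "s \<in> f ` S'" unfolding S'_def by blast
    qed
  qed (auto simp: S'_def)
  have S'_ne: "S' \<noteq> {}"
    using S S_eq by blast
  have S'_max: "S' \<subseteq> max_codewords C"
    unfolding S'_def by blast
  then have S'_sub: "S' \<subseteq> C"
    unfolding max_codewords_def by blast
  have "\<Inter>S' \<in> C"
    using mic S'_max S'_ne unfolding max_intersection_complete_def by blast
  moreover have "f (\<Inter>S') = \<Inter>S"
    using code_morphism_Inter[OF D f S'_sub S'_ne calculation] S_eq by simp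
  ultimately show "\<Inter>S \<in> f ` C" by (metis image_eqI)
qed

theorem theorem1p3:
  fixes n m :: nat and C D :: "nat set set" and f :: "nat set \<Rightarrow> nat set"
  assumes "is_code n C" and "is_code m D"
    and "code_morphism n C m D f"
  shows "(intersection_complete C \<longrightarrow> intersection_complete (f ` C))
       \<and> (max_intersection_complete C \<longrightarrow> max_intersection_complete (f ` C))"
  using intersection_complete_image[OF assms(2,3)]
    max_intersection_complete_image[OF assms] by blast

end
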